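(* Let $\nu\in\mathbb{R}$. Define polynomials $\tilde F_s(\beta)$, $s=1,2,3,\ldots$, by $$\tilde F_1(\beta)=\tfrac18(4\nu^2-1)(\beta^2-1),\qquad \tilde F_2(\beta)=\tfrac18(4\nu^2-1)\beta(\beta^2-1),$$ $$\tilde F_{s+1}(\beta)=\tfrac12(\beta^2-1)\frac{d\tilde F_s(\beta)}{d\beta}-\tfrac12\sum_{j=1}^{s-1}\tilde F_j(\beta)\tilde F_{s-j}(\beta)\quad(s=2,3,4,\ldots),$$ and polynomials $\tilde E_s(\beta)=-\int_0^\beta \frac{\tilde F_s(b)}{b^2-1}\,db$ ($s=1,2,3,\ldots$). Regarded as functions of $z$ via $\beta=z/\sqrt{z^2-1}$, the functions $(z-1)^{1/2}\tilde E_{2s-1}(\beta)$ and $\tilde E_{2s}(\beta)$ ($s=1,2,3,\ldots$) are meromorphic functions at $z=1$.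
   Context: The square roots $\sqrt{z^2-1}$ and $(z-1)^{1/2}$ are taken with principal branches in the $z$-plane cut along $(-\infty,1]$. (Each $\tilde F_s$ vanishes at $\beta=\pm1$, so $\tilde E_s$ is a polynomial.) *)

theory Defs
  imports "HOL-Complex_Analysis.Complex_Analysis" "HOL-Computational_Algebra.Polynomial"
begin

function Ftil :: "real \<Rightarrow> nat \<Rightarrow> complex poly" where
  "Ftil \<nu> 0 = 0"
| "Ftil \<nu> (Suc 0) = smult (complex_of_real ((4 * \<nu>^2 - 1) / 8)) [:-1, 0, 1:]"
| "Ftil \<nu> (Suc (Suc 0)) = smult (complex_of_real ((4 * \<nu>^2 - 1) / 8)) ([:0, 1:] * [:-1, 0, 1:])"
| "Ftil \<nu> (Suc (Suc (Suc n))) =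
     smult (1/2) ([:-1, 0, 1:] * pderiv (Ftil \<nu> (Suc (Suc n))))
     - smult (1/2) (\<Sum>j\<in>{1..Suc n}. Ftil \<nu> j * Ftil \<nu> (Suc (Suc n) - j))"
  by pat_completeness auto
termination
  by (relation "Wellfounded.measure (\<lambda>(\<nu>, s). s)") auto

text \<open>E~_s(beta) = - integral from 0 to beta of F~_s(b)/(b^2-1) db, along the straight segment
  (the integrand has only removable singularities, since F~_s vanishes at +-1).\<close>

definition Etil :: "real \<Rightarrow> nat \<Rightarrow> complex \<Rightarrow> complex" where
  "Etil \<nu> s \<beta> = - contour_integral (linepath 0 \<beta>) (\<lambda>b. poly (Ftil \<nu> s) b / (b^2 - 1))"

text \<open>Principal branch of sqrt(z^2-1) in the plane cut along (-infinity,1]: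
  sqrt(z-1) * sqrt(z+1) with principal square roots.\<close>

definition sqrt_z2m1 :: "complex \<Rightarrow> complex" where
  "sqrt_z2m1 z = csqrt (z - 1) * csqrt (z + 1)"

definition beta_of :: "complex \<Rightarrow> complex" where
  "beta_of z = z / sqrt_z2m1 z"

definition cut_set :: "complex set" where
  "cut_set = {z. Im z = 0 \<and> Re z \<le> 1}"

definition meromorphic_at_cut :: "(complex \<Rightarrow> complex) \<Rightarrow> complex \<Rightarrow> bool" where
  "meromorphic_at_cut f z0 \<longleftrightarrow>
     (\<exists>g. g meromorphic_on {z0} \<and> (\<forall>\<^sub>F z in at z0. z \<notin> cut_set \<longrightarrow> g z = f z))"

end

theory Submission
  imports Defs
begin

text \<open>Both properties "divisible by beta^2 - 1" and "of the parity of s + 1" are preserved by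
  the recurrence for F~_s.  Dividing by the even polynomial beta^2 - 1 preserves parity, so
  E~_s is minus an antiderivative of a polynomial of the parity of s + 1, i.e. a polynomial of
  the parity of s.  An even polynomial in beta is a polynomial in beta^2 = z^2 / (z^2 - 1),
  hence meromorphic in z; an odd one is beta times such a polynomial, and
  sqrt(z - 1) beta = z / sqrt(z + 1) is holomorphic near z = 1.\<close>

definition poly_parity :: "nat \<Rightarrow> 'a::zero poly \<Rightarrow> bool" where
  "poly_parity k p \<longleftrightarrow> (\<forall>i. coeff p i \<noteq> 0 \<longrightarrow> even i = even k)"

lemma poly_parity_cong: "even k = even l \<Longrightarrow> poly_parity k p \<Longrightarrow> poly_parity l p"
  by (simp add: poly_parity_def)

lemma poly_parity_0 [simp]: "poly_parity k 0"
  by (simp add: poly_parity_def)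

lemma poly_parity_add:
  "poly_parity k p \<Longrightarrow> poly_parity k q \<Longrightarrow> poly_parity k (p + q)"
  unfolding poly_parity_def by (metis add.right_neutral coeff_add)

lemma poly_parity_diff:
  fixes p q :: "'a::ab_group_add poly"
  shows "poly_parity k p \<Longrightarrow> poly_parity k q \<Longrightarrow> poly_parity k (p - q)"
  unfolding poly_parity_def by (metis diff_zero coeff_diff)

lemma poly_parity_uminus:
  fixes p :: "'a::ab_group_add poly"
  shows "poly_parity k p \<Longrightarrow> poly_parity k (- p)"
  by (simp add: poly_parity_def)

lemma poly_parity_smult:
  fixes p :: "'a::comm_semiring_0 poly"
  shows "poly_parity k p \<Longrightarrow> poly_parity k (smult c p)"
  unfolding poly_parity_def by (metis coeff_smult mult_zero_right)

lemma poly_parity_sum: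
  "(\<And>x. x \<in> A \<Longrightarrow> poly_parity k (f x)) \<Longrightarrow> poly_parity k (sum f A)"
  by (induction A rule: infinite_finite_induct) (auto intro: poly_parity_add)

lemma poly_parity_pderiv: "poly_parity k p \<Longrightarrow> poly_parity (Suc k) (pderiv p)"
  by (auto simp: poly_parity_def coeff_pderiv)

lemma poly_parity_iff_pcompose_minus_X:
  fixes p :: "'a::{idom,ring_char_0} poly"
  shows "poly_parity k p \<longleftrightarrow> pcompose p [:0, -1:] = smult ((-1) ^ k) p"
proof -
  have "(-1) ^ i * c = (-1) ^ k * c \<longleftrightarrow> c = 0 \<or> even i = even k" for i and c :: 'a
    by (cases "even i"; cases "even k") auto
  then show ?thesis
    by (auto simp: poly_parity_def poly_eq_iff coeff_pcompose_linear)
qed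

lemma poly_parity_mult:
  fixes p q :: "'a::{idom,ring_char_0} poly"
  shows "poly_parity k p \<Longrightarrow> poly_parity l q \<Longrightarrow> poly_parity (k + l) (p * q)"
  by (simp add: poly_parity_iff_pcompose_minus_X pcompose_mult power_add mult.commute)

lemma poly_parity_mult_cancel:
  fixes p q :: "'a::{idom,ring_char_0} poly"
  assumes "q \<noteq> 0" "poly_parity 0 q" "poly_parity k (q * p)"
  shows "poly_parity k p"
proof -
  have "q * pcompose p [:0, -1:] = pcompose (q * p) [:0, -1:]"
    using assms(2) by (simp add: poly_parity_iff_pcompose_minus_X pcompose_mult)
  also have "\<dots> = q * smult ((-1) ^ k) p"
    using assms(3) by (simp add: poly_parity_iff_pcompose_minus_X)
  finally show ?thesis
    unfolding poly_parity_iff_pcompose_minus_X using assms(1) by (metis mult_left_cancel)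
qed

lemma poly_parity_X: "poly_parity 1 [:0, 1:]"
  by (auto simp: poly_parity_def coeff_pCons split: nat.splits)

lemma poly_parity_X2_minus_1: "poly_parity 0 [:-1, 0, 1:]"
  by (auto simp: poly_parity_def coeff_pCons split: nat.splits)

definition poly_antideriv :: "'a::field_char_0 poly \<Rightarrow> 'a poly" where
  "poly_antideriv p =
     Abs_poly (\<lambda>i. if i \<le> degree p + 1 then (if i = 0 then 0 else coeff p (i - 1) / of_nat i) else 0)"

lemma coeff_poly_antideriv:
  "coeff (poly_antideriv p) i = (if i = 0 then 0 else coeff p (i - 1) / of_nat i)"
  unfolding poly_antideriv_def coeff_Abs_poly_If_le by (auto simp: coeff_eq_0)

lemma pderiv_poly_antideriv: "pderiv (poly_antideriv p) = p"
  by (rule poly_eqI) (simp add: coeff_pderiv coeff_poly_antideriv del: of_nat_Suc)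

lemma poly_antideriv_at_0 [simp]: "poly (poly_antideriv p) 0 = 0"
  by (simp add: poly_0_coeff_0 coeff_poly_antideriv)

lemma poly_parity_antideriv: "poly_parity k p \<Longrightarrow> poly_parity (Suc k) (poly_antideriv p)"
  by (auto simp: poly_parity_def coeff_poly_antideriv split: if_splits)

lemma contour_integral_linepath_poly_quotient:
  fixes p q :: "complex poly"
  assumes "q \<noteq> 0"
  shows "contour_integral (linepath a b) (\<lambda>x. poly (q * p) x / poly q x)
       = poly (poly_antideriv p) b - poly (poly_antideriv p) a"
proof (cases "a = b")
  case False
  have "contour_integral (linepath a b) (\<lambda>x. poly (q * p) x / poly q x)
      = contour_integral (linepath a b) (poly p)"
    by (rule contour_integral_spike_finite_simple_path[OF poly_roots_finite[OF assms]])
       (use False in auto)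
  also have "\<dots> = poly (poly_antideriv p) b - poly (poly_antideriv p) a"
  proof -
    have "(poly p has_contour_integral poly (poly_antideriv p) (pathfinish (linepath a b))
            - poly (poly_antideriv p) (pathstart (linepath a b))) (linepath a b)"
      using poly_DERIV[of "poly_antideriv p", unfolded pderiv_poly_antideriv]
      by (intro contour_integral_primitive[where S = UNIV]) auto
    then show ?thesis
      by (simp add: contour_integral_unique)
  qed
  finally show ?thesis .
qed simp

lemma poly_parity_Ftil: "poly_parity (Suc s) (Ftil \<nu> s)"
proof (induction \<nu> s rule: Ftil.induct)
  case (2 \<nu>)
  have "poly_parity 0 (Ftil \<nu> (Suc 0))"
    unfolding Ftil.simps by (intro poly_parity_smult poly_parity_X2_minus_1)
  then show ?case
    by (rule poly_parity_cong[rotated]) simp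
next
  case (3 \<nu>)
  have "poly_parity (1 + 0) (Ftil \<nu> (Suc (Suc 0)))"
    unfolding Ftil.simps
    by (intro poly_parity_smult poly_parity_mult poly_parity_X poly_parity_X2_minus_1)
  then show ?case
    by (rule poly_parity_cong[rotated]) simp
next
  case (4 \<nu> n)
  have derivative_term:
    "poly_parity (0 + Suc (Suc (Suc (Suc n)))) ([:-1, 0, 1:] * pderiv (Ftil \<nu> (Suc (Suc n))))"
    using 4 by (intro poly_parity_mult poly_parity_X2_minus_1 poly_parity_pderiv)
  have product_terms:
    "poly_parity (Suc (Suc (Suc (Suc n)))) (Ftil \<nu> j * Ftil \<nu> (Suc (Suc n) - j))"
    if "j \<in> {1..Suc n}" for j
    using poly_parity_mult[OF 4(2,3)[OF that]] that by (auto elim: poly_parity_cong[rotated])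
  show ?case
    unfolding Ftil.simps(4) using derivative_term
    by (intro poly_parity_diff poly_parity_smult poly_parity_sum product_terms) simp_all
qed simp

lemma X2_minus_1_dvd_Ftil: "[:-1, 0, 1:] dvd Ftil \<nu> s"
proof (induction \<nu> s rule: Ftil.induct)
  case (2 \<nu>)
  show ?case
    unfolding Ftil.simps by (intro dvd_smult dvd_refl)
next
  case (3 \<nu>)
  show ?case
    unfolding Ftil.simps by (intro dvd_smult dvd_triv_right)
next
  case (4 \<nu> n)
  have "[:-1, 0, 1:] dvd Ftil \<nu> j * Ftil \<nu> (Suc (Suc n) - j)" if "j \<in> {1..Suc n}" for j
    using 4(2)[OF that] by (rule dvd_mult2)
  then show ?case
    unfolding Ftil.simps(4) by (intro dvd_diff dvd_smult dvd_sum dvd_triv_left)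
qed simp

lemma Etil_eq_poly_of_parity: "\<exists>P. Etil \<nu> s = poly P \<and> poly_parity s P"
proof -
  define q :: "complex poly" where "q = [:-1, 0, 1:]"
  define G where "G = Ftil \<nu> s div q"
  have F: "Ftil \<nu> s = q * G"
    unfolding q_def G_def by (rule dvd_mult_div_cancel[symmetric, OF X2_minus_1_dvd_Ftil])
  have q_nonzero: "q \<noteq> 0"
    by (simp add: q_def)
  have "poly_parity (Suc s) G"
  proof (rule poly_parity_mult_cancel[OF q_nonzero])
    show "poly_parity 0 q"
      unfolding q_def by (rule poly_parity_X2_minus_1)
    show "poly_parity (Suc s) (q * G)"
      using poly_parity_Ftil[of s \<nu>] by (simp only: F)
  qed
  then have "poly_parity (Suc (Suc s)) (- poly_antideriv G)"
    by (intro poly_parity_uminus poly_parity_antideriv)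
  then have "poly_parity s (- poly_antideriv G)"
    by (rule poly_parity_cong[rotated]) simp
  moreover have "Etil \<nu> s = poly (- poly_antideriv G)"
  proof
    fix \<beta>
    have "b^2 - 1 = poly q b" for b
      by (simp add: q_def power2_eq_square)
    then have "Etil \<nu> s \<beta> = - contour_integral (linepath 0 \<beta>) (\<lambda>b. poly (q * G) b / poly q b)"
      unfolding Etil_def F by (simp only:)
    then show "Etil \<nu> s \<beta> = poly (- poly_antideriv G) \<beta>"
      by (simp only: contour_integral_linepath_poly_quotient[OF q_nonzero]) simp
  qed
  ultimately show ?thesis
    by blast
qed

lemma poly_even_parity_eq:
  fixes p :: "'a::comm_semiring_1 poly"
  assumes "poly_parity 0 p"
  shows "poly p x = (\<Sum>i\<le>degree p. coeff p i * (x^2) ^ (i div 2))"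
  unfolding poly_altdef
proof (rule sum.cong[OF refl])
  fix i
  show "coeff p i * x ^ i = coeff p i * (x^2) ^ (i div 2)"
  proof (cases "coeff p i = 0")
    case False
    with assms have "even i"
      by (auto simp: poly_parity_def)
    then show ?thesis
      by (simp add: power_mult[symmetric])
  qed simp
qed

lemma poly_odd_parity_eq:
  fixes p :: "'a::comm_semiring_1 poly"
  assumes "poly_parity 1 p"
  shows "poly p x = x * (\<Sum>i\<le>degree p. coeff p i * (x^2) ^ (i div 2))"
  unfolding poly_altdef sum_distrib_left
proof (rule sum.cong[OF refl])
  fix i
  show "coeff p i * x ^ i = x * (coeff p i * (x^2) ^ (i div 2))"
  proof (cases "coeff p i = 0")
    case False
    with assms have "i = Suc (2 * (i div 2))"
      by (auto simp: poly_parity_def)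
    then have "x ^ i = x * (x^2) ^ (i div 2)"
      by (metis power_Suc power_mult)
    then show ?thesis
      by (simp add: ac_simps)
  qed simp
qed

lemma beta_of_squared: "(beta_of z)^2 = z^2 / (z^2 - 1)"
proof -
  have "(z - 1) * (z + 1) = z^2 - 1"
    by (simp add: algebra_simps power2_eq_square)
  then show ?thesis
    unfolding beta_of_def sqrt_z2m1_def power_divide power_mult_distrib power2_csqrt by simp
qed

lemma csqrt_mult_beta_of: "z \<noteq> 1 \<Longrightarrow> csqrt (z - 1) * beta_of z = z / csqrt (z + 1)"
  unfolding beta_of_def sqrt_z2m1_def by (simp add: field_simps)

lemma meromorphic_at_cutI:
  "g meromorphic_on {z0} \<Longrightarrow> (\<And>z. z \<notin> cut_set \<Longrightarrow> g z = f z) \<Longrightarrow> meromorphic_at_cut f z0"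
  unfolding meromorphic_at_cut_def by (blast intro: always_eventually)

lemma meromorphic_at_cut_even_poly_beta_of:
  assumes "poly_parity 0 P"
  shows "meromorphic_at_cut (\<lambda>z. poly P (beta_of z)) z0"
proof (rule meromorphic_at_cutI)
  show "(\<lambda>z. \<Sum>i\<le>degree P. coeff P i * (z^2 / (z^2 - 1)) ^ (i div 2)) meromorphic_on {z0}"
    by (intro meromorphic_intros)
  show "(\<Sum>i\<le>degree P. coeff P i * (z^2 / (z^2 - 1)) ^ (i div 2)) = poly P (beta_of z)" for z
    by (simp add: poly_even_parity_eq[OF assms] beta_of_squared)
qed

lemma meromorphic_at_cut_csqrt_odd_poly_beta_of:
  assumes "poly_parity 1 P" and "z0 + 1 \<notin> \<real>\<^sub>\<le>\<^sub>0"
  shows "meromorphic_at_cut (\<lambda>z. csqrt (z - 1) * poly P (beta_of z)) z0"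
proof (rule meromorphic_at_cutI)
  show "(\<lambda>z. z / csqrt (z + 1) * (\<Sum>i\<le>degree P. coeff P i * (z^2 / (z^2 - 1)) ^ (i div 2)))
          meromorphic_on {z0}"
    using assms(2) by (intro meromorphic_intros analytic_on_imp_meromorphic_on analytic_intros) auto
  show "z / csqrt (z + 1) * (\<Sum>i\<le>degree P. coeff P i * (z^2 / (z^2 - 1)) ^ (i div 2))
          = csqrt (z - 1) * poly P (beta_of z)" if "z \<notin> cut_set" for z
  proof -
    have "z \<noteq> 1"
      using that by (auto simp: cut_set_def)
    then show ?thesis
      by (simp add: poly_odd_parity_eq[OF assms(1)] beta_of_squared csqrt_mult_beta_of[symmetric])
  qed
qed

theorem lemma2p1:
  fixes \<nu> :: real and s :: nat
  assumes "s \<ge> 1"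
  shows "meromorphic_at_cut (\<lambda>z. csqrt (z - 1) * Etil \<nu> (2 * s - 1) (beta_of z)) 1
       \<and> meromorphic_at_cut (\<lambda>z. Etil \<nu> (2 * s) (beta_of z)) 1"
proof
  obtain P where P: "Etil \<nu> (2 * s - 1) = poly P" "poly_parity (2 * s - 1) P"
    using Etil_eq_poly_of_parity by blast
  have "poly_parity 1 P"
    using P(2) by (rule poly_parity_cong[rotated]) (use assms in auto)
  moreover have "(1::complex) + 1 \<notin> \<real>\<^sub>\<le>\<^sub>0"
    by (simp add: complex_nonpos_Reals_iff)
  ultimately show "meromorphic_at_cut (\<lambda>z. csqrt (z - 1) * Etil \<nu> (2 * s - 1) (beta_of z)) 1"
    unfolding P(1) by (rule meromorphic_at_cut_csqrt_odd_poly_beta_of)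
  obtain Q where Q: "Etil \<nu> (2 * s) = poly Q" "poly_parity (2 * s) Q"
    using Etil_eq_poly_of_parity by blast
  have "poly_parity 0 Q"
    using Q(2) by (rule poly_parity_cong[rotated]) auto
  then show "meromorphic_at_cut (\<lambda>z. Etil \<nu> (2 * s) (beta_of z)) 1"
    unfolding Q(1) by (rule meromorphic_at_cut_even_poly_beta_of)
qed

end
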